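(* Let $\mathsf{X}\subset\mathbb{R}^d$ be compact, contained in the ball of radius $R$ centered at the origin, and $\alpha,\beta\in\mathcal{M}_+(\mathsf{X})$. Let $p\in[1,+\infty)$, $\mathrm{C}_1(x,y)=|x-y|^p$ on $\mathbb{R}$ and $\mathrm{C}_d(x,y)=\|x-y\|^p$ on $\mathbb{R}^d$. Then $\mathrm{USOT}(\alpha,\beta)\le\mathrm{UOT}(\alpha,\beta)$.
   Context: Fix entropy functions $\varphi_1,\varphi_2$ (convex, l.s.c., domain in $[0,\infty)$, $\varphi(1)=0$); $\mathrm{D}_\varphi(\mu|\nu)=\int\varphi(\frac{d\mu}{d\nu})d\nu+\varphi'_\infty\mu^\perp(\mathbb{R}^s)$. On $\mathbb{R}^d$, $\mathrm{UOT}(\alpha,\beta)=\inf_{\pi\in\mathcal{M}_+(\mathbb{R}^d\times\mathbb{R}^d)}\int\mathrm{C}_dd\pi+\mathrm{D}_{\varphi_1}(\pi_1|\alpha)+\mathrm{D}_{\varphi_2}(\pi_2|\beta)$ ($\pi_1,\pi_2$ marginals). $\mathrm{OT}$ denotes balanced OT with cost $\mathrm{C}_1$ on $\mathbb{R}$. With $\boldsymbol\sigma$ uniform on $\mathbb{S}^{d-1}$, $\theta^\star(x)=\langle\theta,x\rangle$: $\mathrm{SOT}(\pi_1,\pi_2)=\int\mathrm{OT}(\theta^\star_\sharp\pi_1,\theta^\star_\sharp\pi_2)d\boldsymbol\sigma$ and $\mathrm{USOT}(\alpha,\beta)=\inf_{\pi_1,\pi_2\in\mathcal{M}_+(\mathbb{R}^d)}\mathrm{SOT}(\pi_1,\pi_2)+\mathrm{D}_{\varphi_1}(\pi_1|\alpha)+\mathrm{D}_{\varphi_2}(\pi_2|\beta)$.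 *)

theory Defs
  imports "HOL-Probability.Probability"
begin

text \<open>An entropy function is represented as an extended-real valued function on the reals,
  equal to +infinity outside its effective domain.\<close>

definition entropy_function :: "(real \<Rightarrow> ereal) \<Rightarrow> bool" where
  "entropy_function \<phi> \<longleftrightarrow>
     (\<forall>x. \<phi> x \<noteq> -\<infinity>) \<and>
     (\<forall>x. x < 0 \<longrightarrow> \<phi> x = \<infinity>) \<and>
     (\<forall>x y t. 0 \<le> t \<and> t \<le> 1 \<longrightarrow>
        \<phi> (t * x + (1 - t) * y) \<le> ereal t * \<phi> x + ereal (1 - t) * \<phi> y) \<and>
     (\<forall>c. closed {x. \<phi> x \<le> c}) \<and>
     \<phi> 1 = 0"

definition recession :: "(real \<Rightarrow> ereal) \<Rightarrow> ereal" where
  "recession \<phi> = Lim at_top (\<lambda>x. \<phi> x / ereal x)"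

definition eint :: "'a measure \<Rightarrow> ('a \<Rightarrow> ereal) \<Rightarrow> ereal" where
  "eint M g = enn2ereal (\<integral>\<^sup>+ x. e2ennreal (max (g x) 0) \<partial>M)
            - enn2ereal (\<integral>\<^sup>+ x. e2ennreal (max (- g x) 0) \<partial>M)"

definition lebesgue_decomp :: "'a measure \<Rightarrow> 'a measure \<Rightarrow> ('a \<Rightarrow> real) \<Rightarrow> 'a set \<Rightarrow> bool" where
  "lebesgue_decomp \<mu> \<nu> f N \<longleftrightarrow>
     f \<in> borel_measurable \<nu> \<and> (\<forall>x. 0 \<le> f x) \<and> N \<in> sets \<nu> \<and> emeasure \<nu> N = 0 \<and>
     (\<forall>A \<in> sets \<nu>. emeasure \<mu> A = (\<integral>\<^sup>+ x\<in>A. ennreal (f x) \<partial>\<nu>) + emeasure \<mu> (A \<inter> N))"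

definition Dphi :: "(real \<Rightarrow> ereal) \<Rightarrow> 'a measure \<Rightarrow> 'a measure \<Rightarrow> ereal" where
  "Dphi \<phi> \<mu> \<nu> = (THE v. \<exists>f N. lebesgue_decomp \<mu> \<nu> f N \<and>
       v = eint \<nu> (\<lambda>x. \<phi> (f x)) + recession \<phi> * ereal (measure \<mu> N))"

definition finite_borel :: "'a::topological_space measure \<Rightarrow> bool" where
  "finite_borel \<mu> \<longleftrightarrow> sets \<mu> = sets borel \<and> finite_measure \<mu>"

text \<open>Uniform probability measure on the unit sphere: push-forward of the normalised
  Lebesgue measure on the unit ball under radial projection x |-> x/|x|.\<close>
definition sphere_unif :: "'a::euclidean_space measure" where
  "sphere_unif = distr (uniform_measure lborel (ball 0 1)) borel sgn"

text \<open>Balanced 1D optimal transport with cost |x-y|^p (infimum over couplings; +infinity if none).\<close>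
definition OT1 :: "real \<Rightarrow> real measure \<Rightarrow> real measure \<Rightarrow> ennreal" where
  "OT1 p \<mu> \<nu> = Inf {(\<integral>\<^sup>+ z. ennreal (\<bar>fst z - snd z\<bar> powr p) \<partial>\<pi>) | \<pi>.
      finite_borel \<pi> \<and> distr \<pi> borel fst = \<mu> \<and> distr \<pi> borel snd = \<nu>}"

definition SOT :: "real \<Rightarrow> 'a::euclidean_space measure \<Rightarrow> 'a measure \<Rightarrow> ennreal" where
  "SOT p \<pi>1 \<pi>2 = (\<integral>\<^sup>+ \<theta>. OT1 p (distr \<pi>1 borel (\<lambda>x. \<theta> \<bullet> x)) (distr \<pi>2 borel (\<lambda>x. \<theta> \<bullet> x)) \<partial>sphere_unif)"

definition UOT :: "real \<Rightarrow> (real \<Rightarrow> ereal) \<Rightarrow> (real \<Rightarrow> ereal) \<Rightarrow> 'a::euclidean_space measure \<Rightarrow> 'a measure \<Rightarrow> ereal" where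
  "UOT p \<phi>1 \<phi>2 \<alpha> \<beta> = Inf {enn2ereal (\<integral>\<^sup>+ z. ennreal (norm (fst z - snd z) powr p) \<partial>\<pi>)
        + Dphi \<phi>1 (distr \<pi> borel fst) \<alpha> + Dphi \<phi>2 (distr \<pi> borel snd) \<beta> | \<pi>::('a \<times> 'a) measure.
      finite_borel \<pi>}"

definition USOT :: "real \<Rightarrow> (real \<Rightarrow> ereal) \<Rightarrow> (real \<Rightarrow> ereal) \<Rightarrow> 'a::euclidean_space measure \<Rightarrow> 'a measure \<Rightarrow> ereal" where
  "USOT p \<phi>1 \<phi>2 \<alpha> \<beta> = Inf {enn2ereal (SOT p \<pi>1 \<pi>2) + Dphi \<phi>1 \<pi>1 \<alpha> + Dphi \<phi>2 \<pi>2 \<beta> | \<pi>1 \<pi>2.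
      finite_borel \<pi>1 \<and> finite_borel \<pi>2}"

end

theory Submission
  imports Defs
begin

text \<open>Every coupling \<open>\<pi>\<close> admissible for UOT yields, through its two marginals, a candidate
  for USOT with the same divergence terms. Pushing \<open>\<pi>\<close> forward along \<open>z \<mapsto> (\<theta> \<bullet> fst z, \<theta> \<bullet> snd z)\<close>
  gives a coupling of the projected marginals, and \<open>\<bar>\<theta> \<bullet> (x - y)\<bar> \<le> \<parallel>x - y\<parallel>\<close> for \<open>\<parallel>\<theta>\<parallel> \<le> 1\<close>,
  so every one-dimensional transport cost, and hence their average over the sphere, is at most
  the transport cost of \<open>\<pi>\<close>. Neither the support of \<open>\<alpha>, \<beta>\<close> nor the properties of the entropy
  functions play a role, and \<open>0 \<le> p\<close> suffices.\<close>

lemma measurable_finite_borel: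
  assumes "finite_borel \<mu>" and "f \<in> borel_measurable borel"
  shows "f \<in> borel_measurable \<mu>"
  using assms(2) measurable_cong_sets[of \<mu> borel borel borel] assms(1)
  unfolding finite_borel_def by blast

lemma finite_borel_distr:
  assumes "finite_borel \<mu>" and "f \<in> borel_measurable borel"
  shows "finite_borel (distr \<mu> borel f)"
  using assms finite_measure.finite_measure_distr[OF _ measurable_finite_borel[OF assms]]
  unfolding finite_borel_def by simp

lemma prob_space_sphere_unif: "prob_space (sphere_unif :: 'a::euclidean_space measure)"
proof -
  have "emeasure lborel (ball (0::'a) 1) = ennreal (unit_ball_vol DIM('a))"
    using emeasure_ball[of "1::real" "0::'a"] by simp
  then have "emeasure lborel (ball (0::'a) 1) \<noteq> 0"
    using unit_ball_vol_pos[of "real DIM('a)"] by (simp add: less_imp_neq[symmetric])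
  moreover have "emeasure lborel (ball (0::'a) 1) \<noteq> \<infinity>"
    using emeasure_lborel_ball_finite by (metis order.strict_iff_not)
  ultimately have "prob_space (uniform_measure lborel (ball (0::'a) 1))"
    by (rule prob_space_uniform_measure)
  then show ?thesis
    unfolding sphere_unif_def by (rule prob_space.prob_space_distr) simp
qed

lemma AE_sphere_unif_norm_le_1: "AE \<theta> in (sphere_unif :: 'a::euclidean_space measure). norm \<theta> \<le> 1"
  unfolding sphere_unif_def by (subst AE_distr_iff) (auto simp: norm_sgn)

lemma OT1_le_coupling_cost:
  assumes "finite_borel \<pi>"
  shows "OT1 p (distr \<pi> borel fst) (distr \<pi> borel snd)
    \<le> (\<integral>\<^sup>+ z. ennreal (\<bar>fst z - snd z\<bar> powr p) \<partial>\<pi>)"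
  unfolding OT1_def using assms by (intro Inf_lower) blast

lemma OT1_projection_le_cost:
  fixes \<pi> :: "('a::euclidean_space \<times> 'a) measure"
  assumes \<pi>: "finite_borel \<pi>" and "0 \<le> p" and "norm \<theta> \<le> 1"
  shows "OT1 p (distr (distr \<pi> borel fst) borel ((\<bullet>) \<theta>)) (distr (distr \<pi> borel snd) borel ((\<bullet>) \<theta>))
    \<le> (\<integral>\<^sup>+ z. ennreal (norm (fst z - snd z) powr p) \<partial>\<pi>)"
proof -
  define g where "g = (\<lambda>z::'a \<times> 'a. (\<theta> \<bullet> fst z, \<theta> \<bullet> snd z))"
  have g: "g \<in> borel_measurable borel"
    unfolding g_def by (intro borel_measurable_continuous_onI continuous_intros)
  have g\<pi>: "g \<in> borel_measurable \<pi>"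
    using measurable_finite_borel[OF \<pi> g] .
  have fst\<pi>: "fst \<in> borel_measurable \<pi>" and snd\<pi>: "snd \<in> borel_measurable \<pi>"
    by (auto intro!: measurable_finite_borel[OF \<pi>] borel_measurable_continuous_onI continuous_intros)
  have inner: "(\<bullet>) \<theta> \<in> borel_measurable borel"
    and fst: "fst \<in> borel_measurable (borel :: (real \<times> real) measure)"
    and snd: "snd \<in> borel_measurable (borel :: (real \<times> real) measure)"
    by (intro borel_measurable_continuous_onI continuous_intros)+
  have "distr (distr \<pi> borel g) borel fst = distr (distr \<pi> borel fst) borel ((\<bullet>) \<theta>)"
       "distr (distr \<pi> borel g) borel snd = distr (distr \<pi> borel snd) borel ((\<bullet>) \<theta>)"
    unfolding distr_distr[OF fst g\<pi>] distr_distr[OF snd g\<pi>]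
      distr_distr[OF inner fst\<pi>] distr_distr[OF inner snd\<pi>]
    by (simp_all add: comp_def g_def)
  then have "OT1 p (distr (distr \<pi> borel fst) borel ((\<bullet>) \<theta>)) (distr (distr \<pi> borel snd) borel ((\<bullet>) \<theta>))
      \<le> (\<integral>\<^sup>+ w. ennreal (\<bar>fst w - snd w\<bar> powr p) \<partial>distr \<pi> borel g)"
    using OT1_le_coupling_cost[OF finite_borel_distr[OF \<pi> g]] by simp
  also have "\<dots> = (\<integral>\<^sup>+ z. ennreal (\<bar>\<theta> \<bullet> (fst z - snd z)\<bar> powr p) \<partial>\<pi>)"
  proof -
    have "(\<lambda>w::real \<times> real. ennreal (\<bar>fst w - snd w\<bar> powr p)) \<in> borel_measurable borel"
      unfolding borel_prod[symmetric] by measurable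
    then have cost: "(\<lambda>w. ennreal (\<bar>fst w - snd w\<bar> powr p)) \<in> borel_measurable (distr \<pi> borel g)"
      by (simp add: measurable_cong_sets[OF sets_distr refl])
    show ?thesis
      unfolding nn_integral_distr[OF g\<pi> cost] by (simp add: g_def inner_diff_right)
  qed
  also have "\<dots> \<le> (\<integral>\<^sup>+ z. ennreal (norm (fst z - snd z) powr p) \<partial>\<pi>)"
  proof (intro nn_integral_mono ennreal_leI powr_mono2)
    fix z :: "'a \<times> 'a"
    have "\<bar>\<theta> \<bullet> (fst z - snd z)\<bar> \<le> norm \<theta> * norm (fst z - snd z)"
      by (rule Cauchy_Schwarz_ineq2)
    also have "\<dots> \<le> norm (fst z - snd z)"
      using \<open>norm \<theta> \<le> 1\<close> by (simp add: mult_left_le_one_le)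
    finally show "\<bar>\<theta> \<bullet> (fst z - snd z)\<bar> \<le> norm (fst z - snd z)" .
  qed (use \<open>0 \<le> p\<close> in auto)
  finally show ?thesis .
qed

lemma SOT_marginals_le_cost:
  fixes \<pi> :: "('a::euclidean_space \<times> 'a) measure"
  assumes "finite_borel \<pi>" and "0 \<le> p"
  shows "SOT p (distr \<pi> borel fst) (distr \<pi> borel snd)
    \<le> (\<integral>\<^sup>+ z. ennreal (norm (fst z - snd z) powr p) \<partial>\<pi>)"
    (is "_ \<le> ?cost")
proof -
  have "SOT p (distr \<pi> borel fst) (distr \<pi> borel snd) \<le> (\<integral>\<^sup>+ \<theta>. ?cost \<partial>(sphere_unif :: 'a measure))"
    unfolding SOT_def using AE_sphere_unif_norm_le_1 OT1_projection_le_cost[OF assms]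
    by (intro nn_integral_mono_AE) (auto elim!: eventually_mono)
  also have "\<dots> = ?cost"
    using prob_space.emeasure_space_1[OF prob_space_sphere_unif[where 'a='a]] by simp
  finally show ?thesis .
qed

lemma USOT_le_coupling_objective:
  fixes \<pi> :: "('a::euclidean_space \<times> 'a) measure"
  assumes \<pi>: "finite_borel \<pi>" and "0 \<le> p"
  shows "USOT p \<phi>1 \<phi>2 \<alpha> \<beta>
    \<le> enn2ereal (\<integral>\<^sup>+ z. ennreal (norm (fst z - snd z) powr p) \<partial>\<pi>)
       + Dphi \<phi>1 (distr \<pi> borel fst) \<alpha> + Dphi \<phi>2 (distr \<pi> borel snd) \<beta>"
proof -
  have "finite_borel (distr \<pi> borel fst)" and "finite_borel (distr \<pi> borel snd)"
    by (intro finite_borel_distr[OF \<pi>] borel_measurable_continuous_onI continuous_intros)+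
  then have "USOT p \<phi>1 \<phi>2 \<alpha> \<beta> \<le> enn2ereal (SOT p (distr \<pi> borel fst) (distr \<pi> borel snd))
       + Dphi \<phi>1 (distr \<pi> borel fst) \<alpha> + Dphi \<phi>2 (distr \<pi> borel snd) \<beta>"
    unfolding USOT_def by (intro Inf_lower) blast
  also have "\<dots> \<le> enn2ereal (\<integral>\<^sup>+ z. ennreal (norm (fst z - snd z) powr p) \<partial>\<pi>)
       + Dphi \<phi>1 (distr \<pi> borel fst) \<alpha> + Dphi \<phi>2 (distr \<pi> borel snd) \<beta>"
    using SOT_marginals_le_cost[OF assms]
    by (intro add_right_mono) (simp add: less_eq_ennreal.rep_eq)
  finally show ?thesis .
qed

theorem theorem7:
  fixes X :: "'a::euclidean_space set" and R p :: real
    and \<alpha> \<beta> :: "'a measure" and \<phi>1 \<phi>2 :: "real \<Rightarrow> ereal"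
  assumes "entropy_function \<phi>1" and "entropy_function \<phi>2"
    and "compact X" and "X \<subseteq> cball 0 R"
    and "finite_borel \<alpha>" and "emeasure \<alpha> (UNIV - X) = 0"
    and "finite_borel \<beta>" and "emeasure \<beta> (UNIV - X) = 0"
    and "1 \<le> p"
  shows "USOT p \<phi>1 \<phi>2 \<alpha> \<beta> \<le> UOT p \<phi>1 \<phi>2 \<alpha> \<beta>"
  unfolding UOT_def
proof (rule Inf_greatest, safe)
  fix \<pi> :: "('a \<times> 'a) measure"
  assume "finite_borel \<pi>"
  then show "USOT p \<phi>1 \<phi>2 \<alpha> \<beta>
    \<le> enn2ereal (\<integral>\<^sup>+ z. ennreal (norm (fst z - snd z) powr p) \<partial>\<pi>)
       + Dphi \<phi>1 (distr \<pi> borel fst) \<alpha> + Dphi \<phi>2 (distr \<pi> borel snd) \<beta>"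
    using \<open>1 \<le> p\<close> by (intro USOT_le_coupling_objective) auto
qed

end
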